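(* Consider scheduling games on two identical machines of speed $1$ with arbitrary priority lists in which all jobs have negative deterioration (with no restriction relating $a_i$ to the machine speeds). (a) Every such game with exactly two jobs has a pure Nash equilibrium. (b) There exists such a game with three jobs that has no pure Nash equilibrium; for instance, the game with jobs $u,v,w$ with $p_u(t)=\max\{5-1.05t,0.2\}$, $p_v(t)=\max\{4-1.1t,0.2\}$, $p_w(t)=\max\{3-1.2t,0.2\}$ and priority lists $\pi_1=(v,u,w)$, $\pi_2=(w,u,v)$.
   Context: Scheduling game: a finite set $N$ of $n\ge1$ jobs (players) and a set $M$ of machines. Machine $j$ has speed $s_j>0$ and a priority list $\pi_j$, a bijection $N\to\{1,\dots,n\}$; job $u$ has higher priority than $v$ on $j$ iff $\pi_j(u)<\pi_j(v)$ (a list written $(x,y,z)$ gives $x$ the highest priority). A job with negative deterioration has processing-time function $p_i(t)=\max\{\tau_i,b_i-a_it\}$ ($b_i,a_i\ge0$, $\tau_i>0$). A profile $\sigma\in M^N$ assigns each job to a machine. On machine $j$, the jobs assigned to it, listed in increasing $\pi_j$-order as $i_1,i_2,\dots$, are processed without idle time: $S_{i_1}(\sigma)=0$, $C_{i_k}(\sigma)=S_{i_k}(\sigma)+p_{i_k}(S_{i_k}(\sigma))/s_j$, $S_{i_{k+1}}(\sigma)=C_{i_k}(\sigma)$. The cost of job $i$ is $C_i(\sigma)$. A pure Nash equilibrium (NE) is a profile in which no job can strictly decrease its completion time by unilaterally changing its machine. *)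

theory Defs
  imports Complex_Main
begin

definition neg_det :: "real \<Rightarrow> real \<Rightarrow> real \<Rightarrow> real \<Rightarrow> real" where
  "neg_det tau a b = (\<lambda>t. max tau (b - a * t))"

fun run :: "('j \<Rightarrow> real \<Rightarrow> real) \<Rightarrow> real \<Rightarrow> real \<Rightarrow> 'j list \<Rightarrow> real" where
  "run p sp t [] = t"
| "run p sp t (x # xs) = run p sp (t + p x t / sp) xs"

text \<open>Game data: job set N, speeds s, priority lists prio (prio m i = position of job i on
  machine m, smaller = higher priority), processing-time functions p.
  Profile sigma assigns jobs to machines.\<close>
definition start_time ::
  "'j set \<Rightarrow> ('m \<Rightarrow> real) \<Rightarrow> ('m \<Rightarrow> 'j \<Rightarrow> nat) \<Rightarrow> ('j \<Rightarrow> real \<Rightarrow> real) \<Rightarrow> ('j \<Rightarrow> 'm) \<Rightarrow> 'j \<Rightarrow> real" where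
  "start_time N s prio p \<sigma> i =
     run p (s (\<sigma> i)) 0
       (sorted_key_list_of_set (prio (\<sigma> i)) {k \<in> N. \<sigma> k = \<sigma> i \<and> prio (\<sigma> i) k < prio (\<sigma> i) i})"

definition completion ::
  "'j set \<Rightarrow> ('m \<Rightarrow> real) \<Rightarrow> ('m \<Rightarrow> 'j \<Rightarrow> nat) \<Rightarrow> ('j \<Rightarrow> real \<Rightarrow> real) \<Rightarrow> ('j \<Rightarrow> 'm) \<Rightarrow> 'j \<Rightarrow> real" where
  "completion N s prio p \<sigma> i =
     start_time N s prio p \<sigma> i + p i (start_time N s prio p \<sigma> i) / s (\<sigma> i)"

definition is_NE ::
  "'j set \<Rightarrow> 'm set \<Rightarrow> ('m \<Rightarrow> real) \<Rightarrow> ('m \<Rightarrow> 'j \<Rightarrow> nat) \<Rightarrow> ('j \<Rightarrow> real \<Rightarrow> real) \<Rightarrow> ('j \<Rightarrow> 'm) \<Rightarrow> bool" where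
  "is_NE N M s prio p \<sigma> \<longleftrightarrow>
     \<sigma> ` N \<subseteq> M \<and>
     (\<forall>i\<in>N. \<forall>m\<in>M. \<not> (completion N s prio p (\<sigma>(i := m)) i < completion N s prio p \<sigma> i))"

text \<open>Concrete 3-job example: jobs u = 0, v = 1, w = 2; machines 1 and 2.\<close>
definition ex_p :: "nat \<Rightarrow> real \<Rightarrow> real" where
  "ex_p i = (if i = 0 then neg_det (1/5) (21/20) 5
             else if i = 1 then neg_det (1/5) (11/10) 4
             else neg_det (1/5) (6/5) 3)"

definition ex_pi :: "nat \<Rightarrow> nat \<Rightarrow> nat" where
  "ex_pi m i = (if m = 1 then (if i = 1 then 1 else if i = 0 then 2 else 3)
                else (if i = 2 then 1 else if i = 0 then 2 else 3))"

end

theory Submission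
  imports Defs
begin

text \<open>(a) Put the two jobs on different machines. If this is not an equilibrium, some job \<open>i\<close>
  gains by queueing behind the other job \<open>j\<close> on \<open>j\<close>'s machine. Then putting both jobs on that
  machine, \<open>j\<close> first, is an equilibrium: \<open>i\<close> would lose by leaving, and \<open>j\<close>, processed
  first, finishes at the same time wherever it goes.

  (b) In the example each of the eight profiles admits a profitable unilateral deviation,
  read off from the table of completion times.\<close>

context linorder
begin

lemma sorted_key_list_of_set_strict_sorted:
  assumes "sorted_wrt (\<lambda>x y. f x < f y) xs"
  shows "sorted_key_list_of_set f (set xs) = xs"
proof -
  have "sorted_wrt (<) (map f xs)"
    using assms by (simp add: sorted_wrt_map)
  then have sorted: "sorted (map f xs)" and distinct: "distinct (map f xs)"
    by (simp_all add: strict_sorted_iff)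
  interpret folding_insort_key "(\<le>)" "(<)" "set xs" f
    by unfold_locales (use distinct in \<open>simp add: distinct_map\<close>)
  show ?thesis
    by (rule idem_if_sorted_distinct) (use sorted distinct in \<open>simp_all add: distinct_map\<close>)
qed

lemmas sorted_key_list_of_set_empty' = sorted_key_list_of_set_strict_sorted[of _ "[]", simplified]
lemmas sorted_key_list_of_set_singleton = sorted_key_list_of_set_strict_sorted[of _ "[a]" for a, simplified]
lemmas sorted_key_list_of_set_doubleton = sorted_key_list_of_set_strict_sorted[of f "[a, b]" for f a b, simplified]

lemma sorted_key_list_of_set_doubleton':
  "f b < f a \<Longrightarrow> sorted_key_list_of_set f {a, b} = [b, a]"
  using sorted_key_list_of_set_doubleton[of f b a] by (simp add: insert_commute)

end

lemma Collect_mem_insert: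
  "{x \<in> insert a A. P x} = (if P a then insert a {x \<in> A. P x} else {x \<in> A. P x})"
  by auto

lemma completion_two_jobs:
  assumes "N = {i, j}" "i \<noteq> j"
  shows "completion N (\<lambda>_. s) prio p \<sigma> i =
    (if \<sigma> j = \<sigma> i \<and> prio (\<sigma> i) j < prio (\<sigma> i) i then p j 0 / s + p i (p j 0 / s) / s
     else p i 0 / s)"
proof -
  have "{k \<in> N. \<sigma> k = \<sigma> i \<and> prio (\<sigma> i) k < prio (\<sigma> i) i} =
        (if \<sigma> j = \<sigma> i \<and> prio (\<sigma> i) j < prio (\<sigma> i) i then {j} else {})"
    using assms by auto
  then show ?thesis
    by (simp add: completion_def start_time_def sorted_key_list_of_set_empty'
        sorted_key_list_of_set_singleton)
qed

lemma is_NE_two_jobs_together: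
  assumes N: "N = {i, j}" "i \<noteq> j" and "m \<in> M" and j_first: "prio m j < prio m i"
    and gain: "p j 0 / s + p i (p j 0 / s) / s < p i 0 / s"
  shows "is_NE N M (\<lambda>_. s) prio p (\<lambda>_. m)"
  unfolding is_NE_def
proof (intro conjI ballI)
  show "(\<lambda>_. m) ` N \<subseteq> M"
    using \<open>m \<in> M\<close> by auto
next
  fix k m' assume "k \<in> N" "m' \<in> M"
  show "\<not> completion N (\<lambda>_. s) prio p ((\<lambda>_. m)(k := m')) k < completion N (\<lambda>_. s) prio p (\<lambda>_. m) k"
  proof (cases "m' = m")
    case False
    have "N = {j, i}" "j \<noteq> i"
      using N by auto
    consider "k = i" | "k = j"
      using \<open>k \<in> N\<close> N by auto
    then show ?thesis
    proof cases
      case 1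
      then show ?thesis
        using False j_first gain by (simp add: completion_two_jobs[OF N])
    next
      case 2
      then show ?thesis
        using False j_first by (simp add: completion_two_jobs[OF \<open>N = {j, i}\<close> \<open>j \<noteq> i\<close>])
    qed
  qed (simp add: fun_upd_idem)
qed

lemma two_jobs_split_deviation:
  assumes "N = {i, j}" "i \<noteq> j" "\<sigma> i \<noteq> \<sigma> j"
    and "completion N (\<lambda>_. s) prio p (\<sigma>(i := m)) i < completion N (\<lambda>_. s) prio p \<sigma> i"
  shows "prio m j < prio m i \<and> p j 0 / s + p i (p j 0 / s) / s < p i 0 / s"
  using assms completion_two_jobs[OF assms(1,2), where prio = prio and p = p] by (auto split: if_splits)

lemma two_jobs_has_NE:
  assumes "card N = 2" "M \<noteq> {}"
  shows "\<exists>\<sigma>. is_NE N M (\<lambda>_. s) prio p \<sigma>"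
proof -
  obtain i j where N: "N = {i, j}" and "i \<noteq> j"
    using assms(1) card_2_iff by metis
  obtain A where "A \<in> M"
    using assms(2) by blast
  show ?thesis
  proof (cases "M = {A}")
    case True
    then have "is_NE N M (\<lambda>_. s) prio p (\<lambda>_. A)"
      by (auto simp: is_NE_def fun_upd_idem)
    then show ?thesis by blast
  next
    case False
    then obtain B where "B \<in> M" "B \<noteq> A"
      using \<open>A \<in> M\<close> by blast
    define \<sigma> where "\<sigma> k = (if k = i then A else B)" for k
    show ?thesis
    proof (cases "is_NE N M (\<lambda>_. s) prio p \<sigma>")
      case False
      have "\<sigma> ` N \<subseteq> M"
        using N \<open>A \<in> M\<close> \<open>B \<in> M\<close> by (auto simp: \<sigma>_def)
      with False obtain k m where "k \<in> N" "m \<in> M"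
        and improves: "completion N (\<lambda>_. s) prio p (\<sigma>(k := m)) k < completion N (\<lambda>_. s) prio p \<sigma> k"
        unfolding is_NE_def by blast
      obtain l where kl: "N = {k, l}" "k \<noteq> l"
        using \<open>k \<in> N\<close> N \<open>i \<noteq> j\<close> by (metis insert_commute insertE singletonD)
      then have "\<sigma> k \<noteq> \<sigma> l"
        using N \<open>B \<noteq> A\<close> by (auto simp: \<sigma>_def doubleton_eq_iff)
      with kl improves have "is_NE N M (\<lambda>_. s) prio p (\<lambda>_. m)"
        using two_jobs_split_deviation is_NE_two_jobs_together \<open>m \<in> M\<close> by metis
      then show ?thesis by blast
    qed blast
  qed
qed

text \<open>\<^const>\<open>ex_pi\<close> gives every machine other than 1 the priority list of machine 2, so the
  tables below hold for arbitrary profiles.\<close>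

abbreviation ex_completion :: "(nat \<Rightarrow> nat) \<Rightarrow> nat \<Rightarrow> real" where
  "ex_completion \<sigma> i \<equiv> completion {0, 1, 2} (\<lambda>_. 1) ex_pi ex_p \<sigma> i"

lemma ex_completion_u:
  "ex_completion \<sigma> 0 =
     (if \<sigma> 0 = 1 then (if \<sigma> 1 = 1 then 24/5 else 5)
      else (if \<sigma> 2 = \<sigma> 0 then 97/20 else 5))"
  unfolding completion_def start_time_def Collect_mem_insert empty_Collect_eq
  by (simp add: ex_pi_def ex_p_def neg_det_def
      sorted_key_list_of_set_empty' sorted_key_list_of_set_singleton)

lemma ex_completion_v:
  "ex_completion \<sigma> 1 =
     (if \<sigma> 1 = 1 then 4
      else if \<sigma> 0 = \<sigma> 1 then (if \<sigma> 2 = \<sigma> 1 then 101/20 else 26/5)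
      else (if \<sigma> 2 = \<sigma> 1 then 37/10 else 4))"
  unfolding completion_def start_time_def Collect_mem_insert empty_Collect_eq
  by (simp add: ex_pi_def ex_p_def neg_det_def sorted_key_list_of_set_empty'
      sorted_key_list_of_set_singleton sorted_key_list_of_set_doubleton
      sorted_key_list_of_set_doubleton')

lemma ex_completion_w:
  "ex_completion \<sigma> 2 =
     (if \<sigma> 2 = 1 then
        (if \<sigma> 0 = 1 then (if \<sigma> 1 = 1 then 5 else 26/5) else (if \<sigma> 1 = 1 then 21/5 else 3))
      else 3)"
  unfolding completion_def start_time_def Collect_mem_insert empty_Collect_eq
  by (simp add: ex_pi_def ex_p_def neg_det_def sorted_key_list_of_set_empty'
      sorted_key_list_of_set_singleton sorted_key_list_of_set_doubleton
      sorted_key_list_of_set_doubleton')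

lemma ex_profitable_deviation:
  assumes "\<sigma> ` {0, 1, 2} \<subseteq> {1, 2}"
  shows "\<exists>i\<in>{0, 1, 2}. \<exists>m\<in>{1, 2}. ex_completion (\<sigma>(i := m)) i < ex_completion \<sigma> i"
proof -
  have deviation: ?thesis
    if "ex_completion (\<sigma>(i := m)) i < ex_completion \<sigma> i" "i \<in> {0, 1, 2}" "m \<in> {1, 2}" for i m
    using that by blast
  consider "\<sigma> 0 = 1" "\<sigma> 2 = 1" | "\<sigma> 0 = 1" "\<sigma> 1 = 1" "\<sigma> 2 = 2" | "\<sigma> 0 = 1" "\<sigma> 1 = 2" "\<sigma> 2 = 2"
    | "\<sigma> 0 = 2" "\<sigma> 1 = 1" | "\<sigma> 0 = 2" "\<sigma> 1 = 2"
    using assms by auto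
  then show ?thesis
  proof cases
    case 1
    then show ?thesis
      using deviation[of 2 2] ex_completion_w[of \<sigma>] ex_completion_w[of "\<sigma>(2 := 2)"] by simp
  next
    case 2
    then show ?thesis
      using deviation[of 1 2] ex_completion_v[of \<sigma>] ex_completion_v[of "\<sigma>(1 := 2)"] by simp
  next
    case 3
    then show ?thesis
      using deviation[of 0 2] ex_completion_u[of \<sigma>] ex_completion_u[of "\<sigma>(0 := 2)"] by simp
  next
    case 4
    then show ?thesis
      using deviation[of 0 1] ex_completion_u[of \<sigma>] ex_completion_u[of "\<sigma>(0 := 1)"] by simp
  next
    case 5
    then show ?thesis
      using deviation[of 1 1] ex_completion_v[of \<sigma>] ex_completion_v[of "\<sigma>(1 := 1)"] by simp
  qed
qed

theorem theorem6:
  shows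
   "(\<forall>(N :: 'j set) (M :: 'm set) (prio :: 'm \<Rightarrow> 'j \<Rightarrow> nat) tau a b.
       finite N \<and> card N = 2 \<and> card M = 2 \<and>
       (\<forall>m\<in>M. bij_betw (prio m) N {1..card N}) \<and>
       (\<forall>i\<in>N. tau i > 0 \<and> a i \<ge> 0 \<and> b i \<ge> 0) \<longrightarrow>
       (\<exists>\<sigma>. is_NE N M (\<lambda>_. 1) prio (\<lambda>i. neg_det (tau i) (a i) (b i)) \<sigma>))
    \<and> (\<forall>\<sigma>. \<not> is_NE {0, 1, 2 :: nat} {1, 2 :: nat} (\<lambda>_. 1) ex_pi ex_p \<sigma>)"
proof (intro conjI allI impI)
  fix N :: "'j set" and M :: "'m set" and prio :: "'m \<Rightarrow> 'j \<Rightarrow> nat" and tau a b :: "'j \<Rightarrow> real"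
  assume "finite N \<and> card N = 2 \<and> card M = 2 \<and> (\<forall>m\<in>M. bij_betw (prio m) N {1..card N}) \<and>
    (\<forall>i\<in>N. tau i > 0 \<and> a i \<ge> 0 \<and> b i \<ge> 0)"
  then have "card N = 2" "M \<noteq> {}"
    by auto
  then show "\<exists>\<sigma>. is_NE N M (\<lambda>_. 1) prio (\<lambda>i. neg_det (tau i) (a i) (b i)) \<sigma>"
    by (rule two_jobs_has_NE)
next
  fix \<sigma> :: "nat \<Rightarrow> nat"
  show "\<not> is_NE {0, 1, 2} {1, 2} (\<lambda>_. 1) ex_pi ex_p \<sigma>"
    using ex_profitable_deviation[of \<sigma>] by (auto simp: is_NE_def)
qed

end
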